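(* Let $\odot$ be a pseudo-multiplication on $[0,\infty]$ and $\mathcal{B}$ a $\sigma$-algebra on a nonempty set $E$. An optimal measure $\nu$ on $\mathcal{B}$ is semi-$\odot$-finite if and only if it is $\odot$-finite.
   Context: A pseudo-multiplication is a binary operation $\odot$ on $[0,\infty]$ which is associative, continuous on $(0,\infty)\times[0,\infty]$, with $s\mapsto s\odot t$ continuous on $(0,\infty]$ for each $t$, nondecreasing in both arguments, with a left identity $1_\odot$, without zero divisors ($s\odot t=0\Rightarrow0\in\{s,t\}$), and with $0\odot t=t\odot0=0$. An element $t\in[0,\infty]$ is $\odot$-finite if $\inf_{s>0}s\odot t=0$. An optimal measure is a map $\nu:\mathcal{B}\to[0,\infty]$ with $\nu(\emptyset)=0$, $\nu(B\cup B')=\max(\nu(B),\nu(B'))$, continuous from below ($\nu(\bigcup_nB_n)=\lim_n\nu(B_n)$ for nondecreasing sequences) and from above ($\nu(\bigcap_nB_n)=\lim_n\nu(B_n)$ for nonincreasing sequences). $\nu$ is $\odot$-finite if $\nu(E)$ is $\odot$-finite, and semi-$\odot$-finite if for every $B\in\mathcal{B}$, $\nu(B)=\sup\{\nu(A):A\in\mathcal{B},A\subset B,\nu(A)\text{ is }\odot\text{-finite}\}$. *)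

theory Defs
  imports "HOL-Analysis.Analysis"
begin

definition pseudo_mult :: "(ennreal \<Rightarrow> ennreal \<Rightarrow> ennreal) \<Rightarrow> bool" where
  "pseudo_mult f \<longleftrightarrow>
     (\<forall>a b c. f (f a b) c = f a (f b c)) \<and>
     continuous_on ({0<..<\<infinity>} \<times> UNIV) (\<lambda>(s, t). f s t) \<and>
     (\<forall>t. continuous_on {0<..} (\<lambda>s. f s t)) \<and>
     (\<forall>s s' t t'. s \<le> s' \<and> t \<le> t' \<longrightarrow> f s t \<le> f s' t') \<and>
     (\<exists>e. \<forall>t. f e t = t) \<and>
     (\<forall>s t. f s t = 0 \<longrightarrow> s = 0 \<or> t = 0) \<and>
     (\<forall>t. f 0 t = 0 \<and> f t 0 = 0)"

definition pm_finite :: "(ennreal \<Rightarrow> ennreal \<Rightarrow> ennreal) \<Rightarrow> ennreal \<Rightarrow> bool" where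
  "pm_finite f t \<longleftrightarrow> (INF s\<in>{0<..}. f s t) = 0"

definition optimal_measure :: "'a set set \<Rightarrow> ('a set \<Rightarrow> ennreal) \<Rightarrow> bool" where
  "optimal_measure \<B> \<nu> \<longleftrightarrow>
     \<nu> {} = 0 \<and>
     (\<forall>B\<in>\<B>. \<forall>B'\<in>\<B>. \<nu> (B \<union> B') = max (\<nu> B) (\<nu> B')) \<and>
     (\<forall>Bs. range Bs \<subseteq> \<B> \<and> incseq Bs \<longrightarrow> (\<lambda>n. \<nu> (Bs n)) \<longlonglongrightarrow> \<nu> (\<Union>n. Bs n)) \<and>
     (\<forall>Bs. range Bs \<subseteq> \<B> \<and> decseq Bs \<longrightarrow> (\<lambda>n. \<nu> (Bs n)) \<longlonglongrightarrow> \<nu> (\<Inter>n. Bs n))"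

definition pm_finite_measure ::
  "(ennreal \<Rightarrow> ennreal \<Rightarrow> ennreal) \<Rightarrow> 'a set \<Rightarrow> ('a set \<Rightarrow> ennreal) \<Rightarrow> bool" where
  "pm_finite_measure f E \<nu> \<longleftrightarrow> pm_finite f (\<nu> E)"

definition semi_pm_finite_measure ::
  "(ennreal \<Rightarrow> ennreal \<Rightarrow> ennreal) \<Rightarrow> 'a set set \<Rightarrow> ('a set \<Rightarrow> ennreal) \<Rightarrow> bool" where
  "semi_pm_finite_measure f \<B> \<nu> \<longleftrightarrow>
     (\<forall>B\<in>\<B>. \<nu> B = (SUP A\<in>{A\<in>\<B>. A \<subseteq> B \<and> pm_finite f (\<nu> A)}. \<nu> A))"

end

theory Submission
  imports Defs
begin

text \<open>If \<open>\<nu>\<close> is semi-\<open>\<odot>\<close>-finite but \<open>\<nu> E\<close> is not \<open>\<odot>\<close>-finite, fix \<open>0 < c < \<nu> E\<close>. Whenever \<open>D\<close>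
  has \<open>\<odot>\<close>-finite measure, maxitivity forces \<open>\<nu> (E - D) = \<nu> E\<close>, so \<open>E - D\<close> contains a set of
  \<open>\<odot>\<close>-finite measure above \<open>c\<close>; iterating yields pairwise disjoint sets \<open>A\<^sub>n\<close> with
  \<open>\<nu> A\<^sub>n > c\<close>. But the tails \<open>\<Union>m\<ge>n. A\<^sub>m\<close> decrease to the empty set, so continuity from above
  gives \<open>\<nu> A\<^sub>n \<longrightarrow> 0\<close>. The converse holds because \<open>\<odot>\<close>-finiteness is inherited by smaller
  values.\<close>

lemma pm_finite_mono:
  assumes "pseudo_mult f" and "pm_finite f t" and "t' \<le> t"
  shows "pm_finite f t'"
proof -
  have "\<And>s. f s t' \<le> f s t" using assms(1,3) unfolding pseudo_mult_def by auto
  then have "(INF s\<in>{0<..}. f s t') \<le> (INF s\<in>{0<..}. f s t)" by (intro INF_mono) blast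
  then show ?thesis using assms(2) unfolding pm_finite_def by simp
qed

lemma pm_finite_zero:
  assumes "pseudo_mult f"
  shows "pm_finite f 0"
proof -
  have "\<And>s. f s 0 = 0" using assms unfolding pseudo_mult_def by auto
  moreover have "{0::ennreal<..} \<noteq> {}" using zero_less_one greaterThan_iff by blast
  ultimately show ?thesis unfolding pm_finite_def by simp
qed

lemma optimal_measure_empty: "optimal_measure \<B> \<nu> \<Longrightarrow> \<nu> {} = 0"
  unfolding optimal_measure_def by (elim conjE)

lemma optimal_measure_LIMSEQ_Inter:
  "optimal_measure \<B> \<nu> \<Longrightarrow> range Bs \<subseteq> \<B> \<Longrightarrow> decseq Bs \<Longrightarrow>
    (\<lambda>n. \<nu> (Bs n)) \<longlonglongrightarrow> \<nu> (\<Inter>n. Bs n)"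
  unfolding optimal_measure_def by blast

lemma optimal_measure_Un:
  "optimal_measure \<B> \<nu> \<Longrightarrow> A \<in> \<B> \<Longrightarrow> B \<in> \<B> \<Longrightarrow> \<nu> (A \<union> B) = max (\<nu> A) (\<nu> B)"
  unfolding optimal_measure_def by simp

lemma optimal_measure_mono:
  assumes "optimal_measure \<B> \<nu>" and "A \<in> \<B>" "B \<in> \<B>" "A \<subseteq> B"
  shows "\<nu> A \<le> \<nu> B"
proof -
  have "\<nu> B = max (\<nu> A) (\<nu> B)"
    using optimal_measure_Un[OF assms(1-3)] assms(4) by (simp add: Un_absorb1)
  then show ?thesis by (metis max.cobounded1)
qed

lemma disjoint_family_INT_UN_atLeast:
  fixes A :: "nat \<Rightarrow> 'a set"
  assumes "disjoint_family A"
  shows "(\<Inter>n. \<Union>m\<in>{n..}. A m) = {}"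
proof (rule equals0I)
  fix x assume x: "x \<in> (\<Inter>n. \<Union>m\<in>{n..}. A m)"
  then obtain m where "x \<in> A m" by blast
  moreover obtain k where "k > m" "x \<in> A k"
    using x[THEN INT_D, of "Suc m"] by (auto simp: Suc_le_eq)
  ultimately show False using disjoint_family_onD[OF assms, of m k] by auto
qed

lemma optimal_measure_disjoint_family_LIMSEQ_zero:
  assumes \<nu>: "optimal_measure \<B> \<nu>" and "sigma_algebra E \<B>"
    and A: "range A \<subseteq> \<B>" "disjoint_family A"
  shows "(\<lambda>n. \<nu> (A n)) \<longlonglongrightarrow> 0"
proof -
  interpret sigma_algebra E \<B> by fact
  define T where "T n = (\<Union>m\<in>{n..}. A m)" for n
  have T: "range T \<subseteq> \<B>" using A(1) unfolding T_def by auto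
  have "decseq T" unfolding T_def by (intro decseq_SucI UN_mono) auto
  with T have "(\<lambda>n. \<nu> (T n)) \<longlonglongrightarrow> \<nu> (\<Inter>n. T n)" by (rule optimal_measure_LIMSEQ_Inter[OF \<nu>])
  moreover have "(\<Inter>n. T n) = {}"
    unfolding T_def by (rule disjoint_family_INT_UN_atLeast[OF A(2)])
  ultimately have lim: "(\<lambda>n. \<nu> (T n)) \<longlonglongrightarrow> 0" by (simp add: optimal_measure_empty[OF \<nu>])
  have le: "\<nu> (A n) \<le> \<nu> (T n)" for n
  proof (rule optimal_measure_mono[OF \<nu>])
    show "A n \<in> \<B>" using A(1) by (rule range_subsetD)
    show "T n \<in> \<B>" using T by (rule range_subsetD)
    show "A n \<subseteq> T n" unfolding T_def by (rule UN_upper) simp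
  qed
  show ?thesis
    by (rule tendsto_sandwich[of "\<lambda>_. 0" _ _ "\<lambda>n. \<nu> (T n)"])
      (use lim le in \<open>simp_all add: always_eventually\<close>)
qed

lemma semi_pm_finite_large_subset_of_complement:
  assumes \<nu>: "optimal_measure \<B> \<nu>" and "sigma_algebra E \<B>"
    and semi: "semi_pm_finite_measure f \<B> \<nu>" and E: "\<not> pm_finite f (\<nu> E)"
    and D: "D \<in> \<B>" "pm_finite f (\<nu> D)" and c: "c < \<nu> E"
  shows "\<exists>A\<in>\<B>. A \<subseteq> E - D \<and> pm_finite f (\<nu> A) \<and> c < \<nu> A"
proof -
  interpret sigma_algebra E \<B> by fact
  have ED: "E - D \<in> \<B>" using D by auto
  have "D \<union> (E - D) = E" using D(1) sets_into_space by blast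
  then have "\<nu> E = max (\<nu> D) (\<nu> (E - D))" using optimal_measure_Un[OF \<nu> D(1) ED] by simp
  moreover have "\<nu> D \<noteq> \<nu> E" using D(2) E by auto
  ultimately have "\<nu> E = \<nu> (E - D)" by (metis max_def)
  also have "\<dots> = (SUP A\<in>{A\<in>\<B>. A \<subseteq> E - D \<and> pm_finite f (\<nu> A)}. \<nu> A)"
    using semi ED unfolding semi_pm_finite_measure_def by blast
  finally show ?thesis using c by (auto simp: less_SUP_iff)
qed

lemma semi_pm_finite_imp_pm_finite:
  assumes pm: "pseudo_mult f" and \<B>: "sigma_algebra E \<B>" and \<nu>: "optimal_measure \<B> \<nu>"
    and semi: "semi_pm_finite_measure f \<B> \<nu>"
  shows "pm_finite f (\<nu> E)"
proof (rule ccontr)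
  interpret \<B>: sigma_algebra E \<B> by fact
  assume E: "\<not> pm_finite f (\<nu> E)"
  then have "0 < \<nu> E" using pm_finite_zero[OF pm] by (auto simp: zero_less_iff_neq_zero)
  then obtain c where c: "0 < c" "c < \<nu> E" using dense by blast
  define g where "g D = (SOME A. A \<in> \<B> \<and> A \<subseteq> E - D \<and> pm_finite f (\<nu> A) \<and> c < \<nu> A)" for D
  have g: "g D \<in> \<B> \<and> g D \<subseteq> E - D \<and> pm_finite f (\<nu> (g D)) \<and> c < \<nu> (g D)"
    if "D \<in> \<B>" "pm_finite f (\<nu> D)" for D
    using semi_pm_finite_large_subset_of_complement[OF \<nu> \<B> semi E that c(2)]
    unfolding g_def Bex_def by (rule someI_ex)
  define U where "U = rec_nat {} (\<lambda>n D. D \<union> g D)"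
  have U0: "U 0 = {}" and US: "U (Suc n) = U n \<union> g (U n)" for n by (simp_all add: U_def)
  have U: "U n \<in> \<B> \<and> pm_finite f (\<nu> (U n))" for n
  proof (induction n)
    case 0
    show ?case using pm_finite_zero[OF pm] by (simp add: U0 optimal_measure_empty[OF \<nu>])
  next
    case (Suc n)
    with g[of "U n"] have "g (U n) \<in> \<B>" "pm_finite f (\<nu> (g (U n)))" by simp_all
    with Suc show ?case by (simp add: US optimal_measure_Un[OF \<nu>] max_def \<B>.Un)
  qed
  define A where "A n = g (U n)" for n
  have A: "A n \<in> \<B>" "A n \<inter> U n = {}" "c < \<nu> (A n)" for n
    using g[of "U n"] U[of n] unfolding A_def by auto
  have A_U: "A m \<subseteq> U n" if "m < n" for m n
    using that
  proof (induction n)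
    case (Suc n)
    then show ?case by (auto simp: US A_def less_Suc_eq)
  qed simp
  have "disjoint_family A"
    unfolding disjoint_family_on_def
  proof (intro ballI impI)
    fix m n :: nat assume "m \<noteq> n"
    then consider "m < n" | "n < m" by linarith
    then show "A m \<inter> A n = {}" using A(2) A_U by cases blast+
  qed
  then have "(\<lambda>n. \<nu> (A n)) \<longlonglongrightarrow> 0"
    using A(1) by (intro optimal_measure_disjoint_family_LIMSEQ_zero[OF \<nu> \<B>]) auto
  then obtain n where "\<nu> (A n) < c"
    using c(1) by (metis eventually_sequentially order_refl order_tendsto_iff)
  then show False using A(3)[of n] by simp
qed

lemma pm_finite_imp_semi_pm_finite:
  assumes pm: "pseudo_mult f" and "sigma_algebra E \<B>" and \<nu>: "optimal_measure \<B> \<nu>"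
    and fin: "pm_finite f (\<nu> E)"
  shows "semi_pm_finite_measure f \<B> \<nu>"
  unfolding semi_pm_finite_measure_def
proof
  interpret sigma_algebra E \<B> by fact
  fix B assume B: "B \<in> \<B>"
  have "pm_finite f (\<nu> B)"
    using pm_finite_mono[OF pm fin] optimal_measure_mono[OF \<nu> B top] B sets_into_space by blast
  then have "B \<in> {A\<in>\<B>. A \<subseteq> B \<and> pm_finite f (\<nu> A)}" using B by simp
  then show "\<nu> B = (SUP A\<in>{A\<in>\<B>. A \<subseteq> B \<and> pm_finite f (\<nu> A)}. \<nu> A)"
    using optimal_measure_mono[OF \<nu> _ B] by (auto intro!: antisym SUP_upper SUP_least)
qed

theorem proposition6p5:
  fixes f :: "ennreal \<Rightarrow> ennreal \<Rightarrow> ennreal"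
    and E :: "'a set" and \<B> :: "'a set set" and \<nu> :: "'a set \<Rightarrow> ennreal"
  assumes "pseudo_mult f"
    and "sigma_algebra E \<B>"
    and "E \<noteq> {}"
    and "optimal_measure \<B> \<nu>"
  shows "semi_pm_finite_measure f \<B> \<nu> \<longleftrightarrow> pm_finite_measure f E \<nu>"
  using semi_pm_finite_imp_pm_finite[OF assms(1,2,4)] pm_finite_imp_semi_pm_finite[OF assms(1,2,4)]
  unfolding pm_finite_measure_def by blast

end
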